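(* Let $M$ be a connected manifold, $\alpha=\sqrt{a_{ij}y^iy^j}$ a Riemannian metric and $\beta=b_iy^i$ a $1$-form on $M$ with $b:=\|\beta\|_\alpha<1$. Suppose $\tau=\tau(x)$ is a smooth function on $M$ such that $$b_{i|j}=\tau\{(1+2b^2)a_{ij}-3b_ib_j\},\qquad \tau_i=-2\tau^2b_i,$$ where $b_{i|j}$ is the covariant derivative of $\beta$ with respect to $\alpha$ and $\tau_i=\partial\tau/\partial x^i$. Then $\tau=c(1-b^2)$ for some constant $c$. *)

theory Defs
  imports "HOL-Analysis.Analysis"
begin

definition pd :: "(real^'n \<Rightarrow> real) \<Rightarrow> 'n \<Rightarrow> real^'n \<Rightarrow> real" where
  "pd f i x = frechet_derivative f (at x) (axis i 1)"

fun Ck_on :: "nat \<Rightarrow> (real^'n) set \<Rightarrow> (real^'n \<Rightarrow> real) \<Rightarrow> bool" where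
  "Ck_on 0 U f = continuous_on U f"
| "Ck_on (Suc k) U f = ((\<forall>x\<in>U. f differentiable (at x)) \<and> (\<forall>i. Ck_on k U (pd f i)))"

definition smooth_on :: "(real^'n) set \<Rightarrow> (real^'n \<Rightarrow> real) \<Rightarrow> bool" where
  "smooth_on U f \<longleftrightarrow> (\<forall>k. Ck_on k U f)"

definition smooth_map_on :: "(real^'n) set \<Rightarrow> (real^'n \<Rightarrow> real^'m) \<Rightarrow> bool" where
  "smooth_map_on U f \<longleftrightarrow> (\<forall>j. smooth_on U (\<lambda>x. f x $ j))"

definition jacobian :: "(real^'n \<Rightarrow> real^'m) \<Rightarrow> real^'n \<Rightarrow> real^'n^'m" where
  "jacobian f x = (\<chi> j i. pd (\<lambda>y. f y $ j) i x)"

definition is_chart :: "'a topology \<Rightarrow> 'a set \<times> ('a \<Rightarrow> real^'n) \<Rightarrow> bool" where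
  "is_chart X c \<longleftrightarrow> openin X (fst c) \<and> open (snd c ` fst c) \<and>
     homeomorphic_map (subtopology X (fst c)) (subtopology euclidean (snd c ` fst c)) (snd c)"

definition transition :: "'a set \<times> ('a \<Rightarrow> real^'n) \<Rightarrow> 'a set \<times> ('a \<Rightarrow> real^'n)
    \<Rightarrow> real^'n \<Rightarrow> real^'n" where
  "transition c d = snd d \<circ> inv_into (fst c) (snd c)"

definition smooth_atlas :: "'a topology \<Rightarrow> ('a set \<times> ('a \<Rightarrow> real^'n)) set \<Rightarrow> bool" where
  "smooth_atlas X A \<longleftrightarrow> (\<forall>c\<in>A. is_chart X c) \<and> (\<Union>c\<in>A. fst c) = topspace X \<and>
     (\<forall>c\<in>A. \<forall>d\<in>A. smooth_map_on (snd c ` (fst c \<inter> fst d)) (transition c d))"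

definition smooth_manifold :: "'a topology \<Rightarrow> ('a set \<times> ('a \<Rightarrow> real^'n)) set \<Rightarrow> bool" where
  "smooth_manifold X A \<longleftrightarrow> Hausdorff_space X \<and> second_countable X \<and> smooth_atlas X A"

text \<open>A Riemannian metric given by its local components a_ij in each chart
  (g c y is the matrix (a_ij) at coordinate point y of chart c): smooth, symmetric,
  positive definite, transforming as a (0,2)-tensor.\<close>

definition riemannian_metric ::
  "('a set \<times> ('a \<Rightarrow> real^'n)) set \<Rightarrow> ('a set \<times> ('a \<Rightarrow> real^'n) \<Rightarrow> real^'n \<Rightarrow> real^'n^'n) \<Rightarrow> bool" where
  "riemannian_metric A g \<longleftrightarrow>
     (\<forall>c\<in>A. (\<forall>i j. smooth_on (snd c ` fst c) (\<lambda>y. g c y $ i $ j)) \<and>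
        (\<forall>y\<in>snd c ` fst c. transpose (g c y) = g c y \<and>
            (\<forall>v. v \<noteq> 0 \<longrightarrow> v \<bullet> (g c y *v v) > 0))) \<and>
     (\<forall>c\<in>A. \<forall>d\<in>A. \<forall>y\<in>snd c ` (fst c \<inter> fst d).
        g c y = transpose (jacobian (transition c d) y) ** g d (transition c d y)
                ** jacobian (transition c d) y)"

text \<open>A smooth 1-form given by its local components b_i in each chart.\<close>

definition one_form ::
  "('a set \<times> ('a \<Rightarrow> real^'n)) set \<Rightarrow> ('a set \<times> ('a \<Rightarrow> real^'n) \<Rightarrow> real^'n \<Rightarrow> real^'n) \<Rightarrow> bool" where
  "one_form A b \<longleftrightarrow>
     (\<forall>c\<in>A. \<forall>i. smooth_on (snd c ` fst c) (\<lambda>y. b c y $ i)) \<and>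
     (\<forall>c\<in>A. \<forall>d\<in>A. \<forall>y\<in>snd c ` (fst c \<inter> fst d).
        b c y = transpose (jacobian (transition c d) y) *v b d (transition c d y))"

text \<open>Local expressions: squared alpha-norm b^2 = a^{ij} b_i b_j, Christoffel symbols
  Gamma^k_ij of the Levi-Civita connection, covariant derivative b_{i|j}.\<close>

definition norm_sq :: "real^'n^'n \<Rightarrow> real^'n \<Rightarrow> real" where
  "norm_sq a v = v \<bullet> (matrix_inv a *v v)"

definition christoffel :: "(real^'n \<Rightarrow> real^'n^'n) \<Rightarrow> real^'n \<Rightarrow> 'n \<Rightarrow> 'n \<Rightarrow> 'n \<Rightarrow> real" where
  "christoffel a x k i j = (1/2) * (\<Sum>l\<in>UNIV. matrix_inv (a x) $ k $ l *
      (pd (\<lambda>y. a y $ l $ j) i x + pd (\<lambda>y. a y $ l $ i) j x - pd (\<lambda>y. a y $ i $ j) l x))"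

definition covd :: "(real^'n \<Rightarrow> real^'n^'n) \<Rightarrow> (real^'n \<Rightarrow> real^'n) \<Rightarrow> real^'n \<Rightarrow> 'n \<Rightarrow> 'n \<Rightarrow> real" where
  "covd a b x i j = pd (\<lambda>y. b y $ i) j x - (\<Sum>k\<in>UNIV. christoffel a x k i j * b x $ k)"

end

theory Submission
  imports Defs
begin

(*
  Since the Levi-Civita connection is metric, d_k (b^2) = 2 b^i b_{i|k}; contracting the first
  equation with b^i turns this into d_k (1 - b^2) = -2 tau (1 - b^2) b_k. Together with
  tau_k = -2 tau^2 b_k, the quotient rule shows that tau / (1 - b^2) has vanishing derivative in
  every chart. As b^2 does not depend on the chart, this quotient is a well-defined locally
  constant function on M, hence constant because M is connected.
*)

lemma pd_eq_derivative: "(u has_derivative D) (at x) \<Longrightarrow> pd u i x = D (axis i 1)"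
  unfolding pd_def using frechet_derivative_at by metis

lemma has_derivative_pd:
  fixes u :: "real^'n \<Rightarrow> real"
  assumes "u differentiable (at x)"
  shows "(u has_derivative (\<lambda>v. \<Sum>i\<in>UNIV. v$i * pd u i x)) (at x)"
proof -
  let ?D = "frechet_derivative u (at x)"
  have D: "(u has_derivative ?D) (at x)"
    using assms frechet_derivative_works by blast
  have "?D v = (\<Sum>i\<in>UNIV. v$i * pd u i x)" for v
  proof -
    have "?D v = ?D (\<Sum>i\<in>UNIV. v$i *\<^sub>R axis i 1)"
      using basis_expansion[of v] by (simp add: scalar_mult_eq_scaleR)
    also have "\<dots> = (\<Sum>i\<in>UNIV. v$i * ?D (axis i 1))"
      using has_derivative_linear[OF D] by (simp add: linear_sum linear_scale)
    finally show ?thesis by (simp add: pd_def)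
  qed
  then show ?thesis using D by (metis (no_types, lifting) ext)
qed

lemma sum_axis_mult [simp]: "(\<Sum>i\<in>UNIV. axis k (1::real) $ i * c i) = c k"
proof -
  have "(\<Sum>i\<in>UNIV. axis k (1::real) $ i * c i) = (\<Sum>i\<in>UNIV. if i = k then c i else 0)"
    by (rule sum.cong) (auto simp: axis_def)
  then show ?thesis by simp
qed

lemma pd_mult:
  fixes u w :: "real^'n \<Rightarrow> real"
  assumes "u differentiable (at x)" "w differentiable (at x)"
  shows "pd (\<lambda>y. u y * w y) k x = pd u k x * w x + u x * pd w k x"
  using pd_eq_derivative[OF has_derivative_mult[OF has_derivative_pd[OF assms(1)] has_derivative_pd[OF assms(2)]], of k]
  by simp

lemma pd_sum:
  fixes u :: "'i \<Rightarrow> real^'n \<Rightarrow> real"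
  assumes "finite S" "\<forall>s\<in>S. u s differentiable (at x)"
  shows "pd (\<lambda>y. \<Sum>s\<in>S. u s y) k x = (\<Sum>s\<in>S. pd (u s) k x)"
proof -
  have "((\<lambda>y. \<Sum>s\<in>S. u s y) has_derivative (\<lambda>v. \<Sum>s\<in>S. \<Sum>i\<in>UNIV. v$i * pd (u s) i x)) (at x)"
    using assms by (intro has_derivative_sum has_derivative_pd) auto
  from pd_eq_derivative[OF this, of k] show ?thesis by simp
qed

lemma pd_sum_mult:
  fixes u w :: "'i::finite \<Rightarrow> real^'n \<Rightarrow> real"
  assumes "\<forall>i. u i differentiable (at x)" "\<forall>i. w i differentiable (at x)"
  shows "pd (\<lambda>y. \<Sum>i\<in>UNIV. u i y * w i y) k x
    = (\<Sum>i\<in>UNIV. pd (u i) k x * w i x + u i x * pd (w i) k x)"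
  using assms by (simp add: pd_sum pd_mult)

lemma pd_const_diff:
  fixes u :: "real^'n \<Rightarrow> real"
  assumes "u differentiable (at x)"
  shows "pd (\<lambda>y. c - u y) k x = - pd u k x"
proof -
  have "((\<lambda>y. c - u y) has_derivative (\<lambda>v. 0 - (\<Sum>i\<in>UNIV. v$i * pd u i x))) (at x)"
    by (intro has_derivative_diff has_derivative_const has_derivative_pd[OF assms])
  from pd_eq_derivative[OF this, of k] show ?thesis by simp
qed

lemma pd_divide:
  fixes u w :: "real^'n \<Rightarrow> real"
  assumes "u differentiable (at x)" "w differentiable (at x)" "w x \<noteq> 0"
  shows "pd (\<lambda>y. u y / w y) k x = pd u k x / w x - u x * pd w k x / (w x)\<^sup>2"
proof -
  have "((\<lambda>y. u y * inverse (w y)) has_derivative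
      (\<lambda>v. u x * - (inverse (w x) * (\<Sum>i\<in>UNIV. v$i * pd w i x) * inverse (w x))
         + (\<Sum>i\<in>UNIV. v$i * pd u i x) * inverse (w x))) (at x)"
    by (rule has_derivative_mult[OF has_derivative_pd[OF assms(1)]
          Deriv.has_derivative_inverse[OF assms(3) has_derivative_pd[OF assms(2)]]])
  from pd_eq_derivative[OF this, of k] show ?thesis
    by (simp add: divide_inverse power2_eq_square inverse_mult_distrib)
qed

lemma has_derivative_cong_open:
  assumes "open W" "x \<in> W" "\<forall>y\<in>W. u y = w y"
  shows "(u has_derivative D) (at x) \<longleftrightarrow> (w has_derivative D) (at x)"
  using assms has_derivative_transform_within_open[OF _ assms(1,2)] by metis

lemma pd_cong_open:
  assumes "open W" "x \<in> W" "\<forall>y\<in>W. u y = w y"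
  shows "pd u k x = pd w k x"
  unfolding pd_def frechet_derivative_def using has_derivative_cong_open[OF assms] by simp

lemma differentiable_cong_open:
  assumes "open W" "x \<in> W" "\<forall>y\<in>W. u y = w y" "u differentiable (at x)"
  shows "w differentiable (at x)"
  using assms(4) has_derivative_cong_open[OF assms(1-3)] unfolding differentiable_def by blast

lemma smooth_on_imp_differentiable:
  "smooth_on U f \<Longrightarrow> x \<in> U \<Longrightarrow> f differentiable (at x)"
  unfolding smooth_on_def by (metis Ck_on.simps(2))

lemma invertible_iff_ker_trivial:
  fixes G :: "'a::field^'n^'n"
  shows "invertible G \<longleftrightarrow> (\<forall>v. G *v v = 0 \<longrightarrow> v = 0)"
  by (simp add: invertible_left_inverse matrix_left_invertible_ker)

lemma positive_definite_imp_invertible: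
  fixes G :: "real^'n^'n"
  assumes "\<forall>v. v \<noteq> 0 \<longrightarrow> v \<bullet> (G *v v) > 0"
  shows "invertible G"
  unfolding invertible_iff_ker_trivial using assms by force

lemma matrix_mul_matrix_inv:
  fixes G :: "'a::field^'n^'n"
  assumes "invertible G"
  shows "G ** matrix_inv G = mat 1" and "matrix_inv G ** G = mat 1"
proof -
  have "\<exists>G'. G ** G' = mat 1 \<and> G' ** G = mat 1" using assms invertible_def by blast
  then have "G ** matrix_inv G = mat 1 \<and> matrix_inv G ** G = mat 1"
    unfolding matrix_inv_def by (rule someI_ex)
  then show "G ** matrix_inv G = mat 1" "matrix_inv G ** G = mat 1" by auto
qed

lemma matrix_vector_mul_matrix_inv_cancel:
  fixes G :: "'a::field^'n^'n"
  assumes "invertible G"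
  shows "G *v (matrix_inv G *v v) = v"
  using matrix_mul_matrix_inv[OF assms] by (simp add: matrix_vector_mul_assoc)

lemma matrix_inv_solve:
  fixes G :: "'a::field^'n^'n"
  assumes "invertible G" "G *v z = v"
  shows "matrix_inv G *v v = z"
proof -
  have "(matrix_inv G ** G) *v z = matrix_inv G *v (G *v z)"
    by (simp add: matrix_vector_mul_assoc)
  then show ?thesis using matrix_mul_matrix_inv(2)[OF assms(1)] assms(2) by simp
qed

lemma transpose_matrix_inv_symmetric:
  fixes G :: "'a::field^'n^'n"
  assumes "invertible G" "transpose G = G"
  shows "transpose (matrix_inv G) = matrix_inv G"
proof -
  let ?I = "matrix_inv G"
  have "G ** transpose ?I = transpose (?I ** G)"
    using assms(2) by (simp add: matrix_transpose_mul)
  then have GI: "G ** transpose ?I = mat 1"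
    using matrix_mul_matrix_inv[OF assms(1)] by (simp add: transpose_mat)
  have "transpose ?I = (?I ** G) ** transpose ?I" using matrix_mul_matrix_inv[OF assms(1)] by simp
  also have "\<dots> = ?I ** (G ** transpose ?I)" by (simp add: matrix_mul_assoc)
  also have "\<dots> = ?I" using GI by simp
  finally show ?thesis .
qed

lemma matrix_inv_mult_vec_cramer:
  fixes G :: "real^'n^'n"
  assumes "det G \<noteq> 0"
  shows "(matrix_inv G *v v) $ k = det (\<chi> i j. if j = k then v $ i else G $ i $ j) / det G"
proof -
  have "G *v (matrix_inv G *v v) = v"
    using assms invertible_det_nz matrix_vector_mul_matrix_inv_cancel by blast
  then show ?thesis using cramer[OF assms] by simp
qed

lemma norm_sq_congruence:
  fixes G J :: "real^'n^'n"
  assumes pos: "\<forall>v. v \<noteq> 0 \<longrightarrow> v \<bullet> ((transpose J ** G ** J) *v v) > 0"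
    and G: "invertible G"
  shows "norm_sq (transpose J ** G ** J) (transpose J *v v) = norm_sq G v"
proof -
  let ?G' = "transpose J ** G ** J"
  have G'v: "?G' *v w = transpose J *v (G *v (J *v w))" for w
    by (simp add: matrix_vector_mul_assoc matrix_mul_assoc)
  have "v \<bullet> (?G' *v v) = (J *v v) \<bullet> (G *v (J *v v))" for v
    unfolding G'v by (metis dot_lmul_matrix vector_transpose_matrix)
  then have "invertible J"
    unfolding invertible_iff_ker_trivial using pos by (metis inner_zero_left less_irrefl)
  then obtain z where Jz: "J *v z = matrix_inv G *v v"
    using matrix_vector_mul_matrix_inv_cancel by blast
  have "?G' *v z = transpose J *v v"
    unfolding G'v Jz matrix_vector_mul_matrix_inv_cancel[OF G] ..
  then have "matrix_inv ?G' *v (transpose J *v v) = z"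
    using matrix_inv_solve positive_definite_imp_invertible[OF pos] by blast
  then have "norm_sq ?G' (transpose J *v v) = (transpose J *v v) \<bullet> z"
    unfolding norm_sq_def by simp
  also have "\<dots> = v \<bullet> (matrix_inv G *v v)"
    by (metis Jz inner_commute dot_lmul_matrix vector_transpose_matrix)
  finally show ?thesis unfolding norm_sq_def .
qed

lemma differentiable_det:
  fixes M :: "real^'n \<Rightarrow> real^'m^'m"
  assumes "\<forall>i j. (\<lambda>y. M y $ i $ j) differentiable (at x)"
  shows "(\<lambda>y. det (M y)) differentiable (at x)"
proof -
  have prod: "(\<lambda>y. \<Prod>i\<in>S. M y $ i $ p i) differentiable (at x)" if "finite S" for S p
    using that assms by (induction S rule: finite_induct) auto
  show ?thesis
    unfolding det_def using prod by (intro differentiable_sum differentiable_mult) auto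
qed

lemma differentiable_matrix_inv_mult_vec:
  fixes G :: "real^'n \<Rightarrow> real^'n^'n" and v :: "real^'n \<Rightarrow> real^'n"
  assumes "open W" "x \<in> W" "\<forall>y\<in>W. det (G y) \<noteq> 0"
    and "\<forall>i j. (\<lambda>y. G y $ i $ j) differentiable (at x)"
    and "\<forall>i. (\<lambda>y. v y $ i) differentiable (at x)"
  shows "(\<lambda>y. (matrix_inv (G y) *v v y) $ k) differentiable (at x)"
proof (rule differentiable_cong_open[OF assms(1,2)])
  show "\<forall>y\<in>W. det (\<chi> i j. if j = k then v y $ i else G y $ i $ j) / det (G y)
      = (matrix_inv (G y) *v v y) $ k"
    using assms(3) by (simp add: matrix_inv_mult_vec_cramer)
  have "(\<lambda>y. det (\<chi> i j. if j = k then v y $ i else G y $ i $ j)) differentiable (at x)"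
  proof (rule differentiable_det, intro allI)
    fix i j
    show "(\<lambda>y. (\<chi> i j. if j = k then v y $ i else G y $ i $ j) $ i $ j) differentiable (at x)"
      using assms(4,5) by (cases "j = k") simp_all
  qed
  then show "(\<lambda>y. det (\<chi> i j. if j = k then v y $ i else G y $ i $ j) / det (G y))
      differentiable (at x)"
    using assms(2-4) differentiable_det by (intro differentiable_divide) auto
qed

lemma symmetric_entry: "transpose M = M \<Longrightarrow> M $ i $ j = M $ j $ i"
  by (metis transpose_def vec_lambda_beta)

lemma sum_matrix_inv_mult_vec_symmetric:
  fixes G :: "real^'n^'n"
  assumes "invertible G" "transpose G = G"
  shows "(\<Sum>i\<in>UNIV. (matrix_inv G *v v) $ i * G $ i $ k) = v $ k"
proof -
  have "(\<Sum>i\<in>UNIV. (matrix_inv G *v v) $ i * G $ i $ k)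
      = (\<Sum>i\<in>UNIV. G $ k $ i * (matrix_inv G *v v) $ i)"
    by (intro sum.cong refl) (metis symmetric_entry assms(2) mult.commute)
  also have "\<dots> = v $ k"
    using matrix_vector_mul_matrix_inv_cancel[OF assms(1), of v]
    by (simp add: matrix_vector_mult_def vec_eq_iff del: vector_matrix_mul_assoc)
  finally show ?thesis .
qed

lemma sum_raised_mult_covd:
  fixes G :: "real^'n \<Rightarrow> real^'n^'n" and v :: "real^'n \<Rightarrow> real^'n"
    and y :: "real^'n"
  defines "B \<equiv> matrix_inv (G y) *v v y"
  assumes inv: "invertible (G y)" and sym: "transpose (G y) = G y"
  shows "(\<Sum>i\<in>UNIV. B $ i * covd G v y i k)
    = (\<Sum>i\<in>UNIV. B $ i * pd (\<lambda>z. v z $ i) k y)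
      - 1/2 * (\<Sum>i\<in>UNIV. \<Sum>l\<in>UNIV. B $ i * B $ l * pd (\<lambda>z. G z $ l $ i) k y)"
proof -
  define dG where "dG l j i = pd (\<lambda>z. G z $ l $ j) i y" for l j i
  define X where "X i l = dG l k i + dG l i k - dG i k l" for i l
  have inv_sym: "matrix_inv (G y) $ m $ l = matrix_inv (G y) $ l $ m" for m l
    using symmetric_entry[OF transpose_matrix_inv_symmetric[OF inv sym]] .
  have "(\<Sum>m\<in>UNIV. christoffel G y m i k * v y $ m)
      = (\<Sum>m\<in>UNIV. \<Sum>l\<in>UNIV. 1/2 * (matrix_inv (G y) $ l $ m * v y $ m * X i l))" for i
    unfolding christoffel_def X_def dG_def
    by (simp add: inv_sym sum_distrib_left sum_distrib_right mult_ac)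
  also have "\<dots> i = 1/2 * (\<Sum>l\<in>UNIV. B $ l * X i l)" for i
    by (subst sum.swap) (simp add: B_def matrix_vector_mult_def sum_distrib_left sum_distrib_right mult_ac)
  finally have covd_eq: "covd G v y i k = pd (\<lambda>z. v z $ i) k y - 1/2 * (\<Sum>l\<in>UNIV. B $ l * X i l)" for i
    unfolding covd_def by simp
  \<comment> \<open>The terms dG l k i and dG i k l of X cancel against each other under the swap of i and l.\<close>
  have "(\<Sum>i\<in>UNIV. \<Sum>l\<in>UNIV. B $ i * B $ l * dG l k i) = (\<Sum>i\<in>UNIV. \<Sum>l\<in>UNIV. B $ i * B $ l * dG i k l)"
    by (subst sum.swap) (simp add: mult_ac)
  then have contract_X: "(\<Sum>i\<in>UNIV. B $ i * (\<Sum>l\<in>UNIV. B $ l * X i l))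
      = (\<Sum>i\<in>UNIV. \<Sum>l\<in>UNIV. B $ i * B $ l * dG l i k)"
    unfolding X_def by (simp add: sum_distrib_left algebra_simps sum.distrib sum_subtractf)
  have "(\<Sum>i\<in>UNIV. B $ i * covd G v y i k)
      = (\<Sum>i\<in>UNIV. B $ i * pd (\<lambda>z. v z $ i) k y) - 1/2 * (\<Sum>i\<in>UNIV. B $ i * (\<Sum>l\<in>UNIV. B $ l * X i l))"
    unfolding covd_eq by (simp add: right_diff_distrib sum_subtractf sum_distrib_left)
  then show ?thesis
    unfolding contract_X dG_def .
qed

lemma differentiable_norm_sq:
  fixes G :: "real^'n \<Rightarrow> real^'n^'n" and v :: "real^'n \<Rightarrow> real^'n"
  assumes "open W" "y \<in> W" "\<forall>z\<in>W. invertible (G z)"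
    and "\<forall>i j. (\<lambda>z. G z $ i $ j) differentiable (at y)"
    and "\<forall>i. (\<lambda>z. v z $ i) differentiable (at y)"
  shows "(\<lambda>z. norm_sq (G z) (v z)) differentiable (at y)"
  unfolding norm_sq_def inner_vec_def using assms
  by (auto simp: invertible_det_nz
      intro!: differentiable_sum differentiable_mult differentiable_matrix_inv_mult_vec)

lemma pd_norm_sq:
  fixes G :: "real^'n \<Rightarrow> real^'n^'n" and v :: "real^'n \<Rightarrow> real^'n"
    and y :: "real^'n"
  defines "B \<equiv> matrix_inv (G y) *v v y"
  assumes W: "open W" "y \<in> W" and inv: "\<forall>z\<in>W. invertible (G z)"
    and sym: "transpose (G y) = G y"
    and dG: "\<forall>i j. (\<lambda>z. G z $ i $ j) differentiable (at y)"
    and dv: "\<forall>i. (\<lambda>z. v z $ i) differentiable (at y)"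
  shows "pd (\<lambda>z. norm_sq (G z) (v z)) k y = 2 * (\<Sum>i\<in>UNIV. B $ i * covd G v y i k)"
proof -
  define Bf where "Bf z = matrix_inv (G z) *v v z" for z
  define P where "P i = pd (\<lambda>z. v z $ i) k y" for i
  define Q where "Q j = pd (\<lambda>z. Bf z $ j) k y" for j
  define D where "D l j = pd (\<lambda>z. G z $ l $ j) k y" for l j
  have dB: "\<forall>i. (\<lambda>z. Bf z $ i) differentiable (at y)"
    unfolding Bf_def using W inv dG dv
    by (intro allI differentiable_matrix_inv_mult_vec) (auto simp: invertible_det_nz)
  have "norm_sq (G z) (v z) = (\<Sum>i\<in>UNIV. v z $ i * Bf z $ i)" for z
    unfolding norm_sq_def Bf_def inner_vec_def by simp
  then have pd_eq: "pd (\<lambda>z. norm_sq (G z) (v z)) k y = (\<Sum>i\<in>UNIV. P i * B $ i + v y $ i * Q i)"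
    using pd_sum_mult[of "\<lambda>i z. v z $ i" y "\<lambda>i z. Bf z $ i" k] dv dB
    by (simp add: P_def Q_def B_def Bf_def)
  have product_rule: "(\<Sum>j\<in>UNIV. D i j * B $ j + G y $ i $ j * Q j) = P i" for i
  proof -
    have "v z $ i = (\<Sum>j\<in>UNIV. G z $ i $ j * Bf z $ j)" if "z \<in> W" for z
      using matrix_vector_mul_matrix_inv_cancel[of "G z" "v z"] inv that
      by (simp add: Bf_def matrix_vector_mult_def vec_eq_iff)
    then have "P i = pd (\<lambda>z. \<Sum>j\<in>UNIV. G z $ i $ j * Bf z $ j) k y"
      unfolding P_def by (intro pd_cong_open[OF W]) auto
    then show ?thesis
      using pd_sum_mult[of "\<lambda>j z. G z $ i $ j" y "\<lambda>j z. Bf z $ j" k] dG dB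
      by (simp add: D_def Q_def B_def Bf_def)
  qed
  have v_eq: "v y $ i = (\<Sum>j\<in>UNIV. G y $ j $ i * B $ j)" for i
    using sum_matrix_inv_mult_vec_symmetric[OF inv[rule_format, OF W(2)] sym, of "v y" i]
    by (simp add: B_def mult.commute)
  have "(\<Sum>i\<in>UNIV. v y $ i * Q i) = (\<Sum>j\<in>UNIV. B $ j * (\<Sum>i\<in>UNIV. G y $ j $ i * Q i))"
    unfolding v_eq sum_distrib_right by (subst sum.swap) (simp add: sum_distrib_left mult_ac)
  also have "\<dots> = (\<Sum>j\<in>UNIV. B $ j * P j) - (\<Sum>j\<in>UNIV. \<Sum>i\<in>UNIV. B $ j * B $ i * D j i)"
  proof -
    have "(\<Sum>i\<in>UNIV. G y $ j $ i * Q i) = P j - (\<Sum>i\<in>UNIV. B $ i * D j i)" for j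
      using product_rule[of j] by (simp add: sum.distrib algebra_simps)
    then show ?thesis by (simp add: right_diff_distrib sum_subtractf sum_distrib_left mult_ac)
  qed
  finally have "pd (\<lambda>z. norm_sq (G z) (v z)) k y
      = 2 * (\<Sum>j\<in>UNIV. B $ j * P j) - (\<Sum>j\<in>UNIV. \<Sum>i\<in>UNIV. B $ j * B $ i * D j i)"
    unfolding pd_eq sum.distrib by (simp add: mult.commute)
  also have "\<dots> = 2 * (\<Sum>i\<in>UNIV. B $ i * covd G v y i k)"
    unfolding sum_raised_mult_covd[of G y v, OF inv[rule_format, OF W(2)] sym, folded B_def]
    by (subst (2) sum.swap) (simp add: P_def D_def mult_ac)
  finally show ?thesis .
qed

lemma pd_norm_sq_special_covd:
  fixes G :: "real^'n \<Rightarrow> real^'n^'n" and v :: "real^'n \<Rightarrow> real^'n" and t :: real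
  assumes W: "open W" "y \<in> W" and inv: "\<forall>z\<in>W. invertible (G z)"
    and sym: "transpose (G y) = G y"
    and dG: "\<forall>i j. (\<lambda>z. G z $ i $ j) differentiable (at y)"
    and dv: "\<forall>i. (\<lambda>z. v z $ i) differentiable (at y)"
    and covd_eq: "\<forall>i j. covd G v y i j =
      t * ((1 + 2 * norm_sq (G y) (v y)) * G y $ i $ j - 3 * v y $ i * v y $ j)"
  shows "pd (\<lambda>z. norm_sq (G z) (v z)) k y = 2 * t * (1 - norm_sq (G y) (v y)) * v y $ k"
proof -
  define n where "n = norm_sq (G y) (v y)"
  define B where "B = matrix_inv (G y) *v v y"
  have GB: "(\<Sum>i\<in>UNIV. B $ i * G y $ i $ k) = v y $ k"
    unfolding B_def using inv W(2) sym by (simp add: sum_matrix_inv_mult_vec_symmetric)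
  have vB: "(\<Sum>i\<in>UNIV. B $ i * v y $ i) = n"
    by (simp add: n_def B_def norm_sq_def inner_vec_def mult.commute)
  have "(\<Sum>i\<in>UNIV. B $ i * covd G v y i k)
      = (\<Sum>i\<in>UNIV. t * (1 + 2 * n) * (B $ i * G y $ i $ k) - 3 * t * v y $ k * (B $ i * v y $ i))"
    unfolding covd_eq[rule_format] n_def by (intro sum.cong refl) (simp add: algebra_simps)
  also have "\<dots> = t * (1 + 2 * n) * (\<Sum>i\<in>UNIV. B $ i * G y $ i $ k)
      - 3 * t * v y $ k * (\<Sum>i\<in>UNIV. B $ i * v y $ i)"
    by (simp add: sum_subtractf flip: sum_distrib_left)
  finally have "(\<Sum>i\<in>UNIV. B $ i * covd G v y i k) = t * (1 - n) * v y $ k"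
    unfolding GB vB by (simp add: algebra_simps)
  then show ?thesis
    unfolding n_def B_def pd_norm_sq[OF W inv sym dG dv] by simp
qed

lemma ratio_has_derivative_zero:
  fixes G :: "real^'n \<Rightarrow> real^'n^'n" and v :: "real^'n \<Rightarrow> real^'n" and T :: "real^'n \<Rightarrow> real"
  assumes W: "open W" "y \<in> W" and inv: "\<forall>z\<in>W. invertible (G z)"
    and sym: "transpose (G y) = G y"
    and dG: "\<forall>i j. (\<lambda>z. G z $ i $ j) differentiable (at y)"
    and dv: "\<forall>i. (\<lambda>z. v z $ i) differentiable (at y)"
    and dT: "T differentiable (at y)"
    and ne1: "norm_sq (G y) (v y) \<noteq> 1"
    and covd_eq: "\<forall>i j. covd G v y i j =
      T y * ((1 + 2 * norm_sq (G y) (v y)) * G y $ i $ j - 3 * v y $ i * v y $ j)"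
    and pd_T: "\<forall>i. pd T i y = - 2 * (T y)\<^sup>2 * v y $ i"
  shows "((\<lambda>z. T z / (1 - norm_sq (G z) (v z))) has_derivative (\<lambda>h. 0)) (at y)"
proof -
  define f where "f z = norm_sq (G z) (v z)" for z
  have pd_f: "pd f k y = 2 * T y * (1 - f y) * v y $ k" for k
    unfolding f_def using pd_norm_sq_special_covd[OF W inv sym dG dv covd_eq] .
  have df: "f differentiable (at y)"
    unfolding f_def using differentiable_norm_sq[OF W inv dG dv] .
  have nz: "1 - f y \<noteq> 0" using ne1 by (simp add: f_def)
  have "pd (\<lambda>z. T z / (1 - f z)) k y = 0" for k
  proof -
    have "pd (\<lambda>z. T z / (1 - f z)) k y
        = pd T k y / (1 - f y) - T y * pd (\<lambda>z. 1 - f z) k y / (1 - f y)\<^sup>2"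
      using dT df nz by (intro pd_divide) auto
    also have "\<dots> = - 2 * (T y)\<^sup>2 * v y $ k / (1 - f y)
        + T y * (2 * T y * (1 - f y) * v y $ k) / (1 - f y)\<^sup>2"
      using pd_T by (simp add: pd_const_diff[OF df] pd_f)
    also have "\<dots> = 0"
      using nz by (simp add: power2_eq_square)
    finally show ?thesis .
  qed
  then show ?thesis
    using has_derivative_pd[of "\<lambda>z. T z / (1 - f z)" y] dT df nz unfolding f_def by auto
qed

lemma smooth_atlas_chart: "smooth_atlas X A \<Longrightarrow> c \<in> A \<Longrightarrow> is_chart X c"
  unfolding smooth_atlas_def by blast

lemma chart_image_open: "is_chart X c \<Longrightarrow> open (snd c ` fst c)"
  unfolding is_chart_def by blast

lemma chart_inv_into:
  assumes "is_chart X c" "p \<in> fst c"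
  shows "inv_into (fst c) (snd c) (snd c p) = p"
proof -
  have "fst c \<subseteq> topspace X" "homeomorphic_map (subtopology X (fst c)) (top_of_set (snd c ` fst c)) (snd c)"
    using assms(1) openin_subset unfolding is_chart_def by blast+
  then have "inj_on (snd c) (fst c)"
    using homeomorphic_imp_injective_map by (fastforce simp: Int_absorb1)
  then show ?thesis using assms(2) by simp
qed

lemma chart_preimage_open:
  assumes "is_chart X c" "open S"
  shows "openin X {q \<in> fst c. snd c q \<in> S}"
proof -
  let ?W = "snd c ` fst c"
  have chart: "openin X (fst c)" "open ?W"
      "continuous_map (subtopology X (fst c)) (top_of_set ?W) (snd c)"
    using assms(1) homeomorphic_imp_continuous_map unfolding is_chart_def by blast+
  have "openin (subtopology X (fst c)) {q \<in> topspace (subtopology X (fst c)). snd c q \<in> ?W \<inter> S}"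
    using chart(3) openin_open_Int[OF assms(2)] unfolding continuous_map by blast
  moreover have "{q \<in> topspace (subtopology X (fst c)). snd c q \<in> ?W \<inter> S} = {q \<in> fst c. snd c q \<in> S}"
    using openin_subset[OF chart(1)] by auto
  ultimately show ?thesis using openin_trans_full[OF _ chart(1)] by simp
qed

lemma connected_space_locally_constant_imp_constant:
  assumes conn: "connected_space X"
    and loc: "\<forall>p\<in>topspace X. \<exists>V. openin X V \<and> p \<in> V \<and> (\<forall>q\<in>V. f q = f p)"
    and "p \<in> topspace X" "q \<in> topspace X"
  shows "f p = f q"
proof -
  have level_open: "openin X {x \<in> topspace X. P (f x)}" for P
  proof (subst openin_subopen, intro ballI)
    fix x assume x: "x \<in> {x \<in> topspace X. P (f x)}"
    then obtain V where V: "openin X V" "x \<in> V" "\<forall>q\<in>V. f q = f x"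
      using loc by blast
    have "V \<subseteq> {x \<in> topspace X. P (f x)}"
    proof
      fix q assume "q \<in> V"
      then have "f q = f x" "q \<in> topspace X" using V(3) openin_subset[OF V(1)] by blast+
      then show "q \<in> {x \<in> topspace X. P (f x)}" using x by simp
    qed
    then show "\<exists>T. openin X T \<and> x \<in> T \<and> T \<subseteq> {x \<in> topspace X. P (f x)}"
      using V by blast
  qed
  show ?thesis
  proof (rule ccontr)
    assume "f p \<noteq> f q"
    show False
      by (rule connected_spaceD[OF conn level_open[of "\<lambda>a. a = f p"] level_open[of "\<lambda>a. a \<noteq> f p"]])
        (use assms(3,4) \<open>f p \<noteq> f q\<close> in auto)
  qed
qed

lemma chart_zero_derivative_locally_constant:
  fixes f :: "real^'n \<Rightarrow> 'b::real_normed_vector"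
  assumes chart: "is_chart X c" and p: "p \<in> fst c"
    and deriv: "\<forall>y\<in>snd c ` fst c. (f has_derivative (\<lambda>v. 0)) (at y)"
  shows "\<exists>V. openin X V \<and> p \<in> V \<and> V \<subseteq> fst c \<and> (\<forall>q\<in>V. f (snd c q) = f (snd c p))"
proof -
  obtain e where e: "e > 0" "ball (snd c p) e \<subseteq> snd c ` fst c"
    using chart_image_open[OF chart] p open_contains_ball by blast
  have "(f has_derivative (\<lambda>v. 0)) (at z within ball (snd c p) e)" if "z \<in> ball (snd c p) e" for z
  proof (rule has_derivative_at_withinI)
    show "(f has_derivative (\<lambda>v. 0)) (at z)" using deriv e(2) that by blast
  qed
  then have "\<exists>C. \<forall>z\<in>ball (snd c p) e. f z = C"
    by (rule has_derivative_zero_constant[OF convex_ball])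
  then obtain C where C: "\<forall>z\<in>ball (snd c p) e. f z = C" ..
  define V where "V = {q \<in> fst c. snd c q \<in> ball (snd c p) e}"
  have "openin X V"
    unfolding V_def by (rule chart_preimage_open[OF chart open_ball])
  moreover have "p \<in> V" using p e(1) by (simp add: V_def)
  moreover have "V \<subseteq> fst c" by (simp add: V_def)
  moreover have "\<forall>q\<in>V. f (snd c q) = f (snd c p)"
    using C \<open>p \<in> V\<close> by (simp add: V_def)
  ultimately show ?thesis by blast
qed

lemma constant_if_chartwise_zero_derivative:
  fixes h :: "'a set \<times> ('a \<Rightarrow> real^'n) \<Rightarrow> real^'n \<Rightarrow> real"
  assumes atlas: "smooth_atlas X A" and conn: "connected_space X"
    and compat: "\<forall>c\<in>A. \<forall>d\<in>A. \<forall>p\<in>fst c \<inter> fst d. h c (snd c p) = h d (snd d p)"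
    and deriv: "\<forall>c\<in>A. \<forall>y\<in>snd c ` fst c. (h c has_derivative (\<lambda>v. 0)) (at y)"
  shows "\<exists>C. \<forall>c\<in>A. \<forall>p\<in>fst c. h c (snd c p) = C"
proof -
  have cover: "(\<Union>c\<in>A. fst c) = topspace X"
    using atlas unfolding smooth_atlas_def by blast
  define H where "H p = h (SOME c. c \<in> A \<and> p \<in> fst c) (snd (SOME c. c \<in> A \<and> p \<in> fst c) p)" for p
  have H: "H p = h c (snd c p)" if "c \<in> A" "p \<in> fst c" for c p
  proof -
    let ?d = "SOME c. c \<in> A \<and> p \<in> fst c"
    have "?d \<in> A \<and> p \<in> fst ?d"
      by (rule someI_ex) (use that in blast)
    then have "h ?d (snd ?d p) = h c (snd c p)"
      using compat that by blast
    then show ?thesis by (simp add: H_def)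
  qed
  have "\<exists>V. openin X V \<and> p \<in> V \<and> (\<forall>q\<in>V. H q = H p)" if p: "p \<in> topspace X" for p
  proof -
    obtain c where c: "c \<in> A" "p \<in> fst c"
      using p unfolding cover[symmetric] by blast
    have "\<forall>y\<in>snd c ` fst c. (h c has_derivative (\<lambda>v. 0)) (at y)"
      using deriv c(1) by blast
    then obtain V where V: "openin X V" "p \<in> V" "V \<subseteq> fst c"
      and const: "\<forall>q\<in>V. h c (snd c q) = h c (snd c p)"
      using chart_zero_derivative_locally_constant[OF smooth_atlas_chart[OF atlas c(1)] c(2)]
      by blast
    have "H q = H p" if "q \<in> V" for q
      using const that V(3) H[OF c(1)] c(2) by auto
    then show ?thesis using V(1,2) by blast
  qed
  then have "\<forall>p\<in>topspace X. \<exists>V. openin X V \<and> p \<in> V \<and> (\<forall>q\<in>V. H q = H p)" by blast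
  then have "H p = H q" if "p \<in> topspace X" "q \<in> topspace X" for p q
    by (rule connected_space_locally_constant_imp_constant[OF conn _ that])
  moreover have "p \<in> topspace X" if "c \<in> A" "p \<in> fst c" for c p
    using that cover by blast
  ultimately have "h c (snd c p) = H (SOME q. q \<in> topspace X)" if "c \<in> A" "p \<in> fst c" for c p
    by (metis H that someI)
  then show ?thesis by blast
qed

lemma riemannian_metric_chartD:
  assumes "riemannian_metric A g" "c \<in> A" "y \<in> snd c ` fst c"
  shows "invertible (g c y)" "transpose (g c y) = g c y"
    "\<forall>i j. (\<lambda>z. g c z $ i $ j) differentiable (at y)"
  using assms positive_definite_imp_invertible smooth_on_imp_differentiable
  unfolding riemannian_metric_def by blast+

lemma one_form_chartD:
  assumes "one_form A b" "c \<in> A" "y \<in> snd c ` fst c"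
  shows "\<forall>i. (\<lambda>z. b c z $ i) differentiable (at y)"
  using assms smooth_on_imp_differentiable unfolding one_form_def by blast

lemma norm_sq_chart_independent:
  assumes atlas: "smooth_atlas X A" and alpha: "riemannian_metric A g" and beta: "one_form A b"
    and c: "c \<in> A" "p \<in> fst c" and d: "d \<in> A" "p \<in> fst d"
  shows "norm_sq (g c (snd c p)) (b c (snd c p)) = norm_sq (g d (snd d p)) (b d (snd d p))"
proof -
  let ?y = "snd c p" and ?J = "jacobian (transition c d) (snd c p)"
  have y: "?y \<in> snd c ` (fst c \<inter> fst d)" using c d by blast
  have "transition c d ?y = snd d p"
    using chart_inv_into[OF smooth_atlas_chart[OF atlas c(1)] c(2)] unfolding transition_def by simp
  then have g: "g c ?y = transpose ?J ** g d (snd d p) ** ?J"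
    and b: "b c ?y = transpose ?J *v b d (snd d p)"
    using alpha beta y c(1) d(1) unfolding riemannian_metric_def one_form_def by metis+
  have "\<forall>v. v \<noteq> 0 \<longrightarrow> v \<bullet> (g c ?y *v v) > 0"
    using alpha c unfolding riemannian_metric_def by blast
  then show ?thesis
    unfolding g b
    by (rule norm_sq_congruence[OF _ riemannian_metric_chartD(1)[OF alpha d(1)]]) (use d(2) in simp)
qed

theorem lemma2p3:
  fixes X :: "'a topology"
    and A :: "('a set \<times> ('a \<Rightarrow> real^'n)) set"
    and g :: "'a set \<times> ('a \<Rightarrow> real^'n) \<Rightarrow> real^'n \<Rightarrow> real^'n^'n"
    and b :: "'a set \<times> ('a \<Rightarrow> real^'n) \<Rightarrow> real^'n \<Rightarrow> real^'n"
    and \<tau> :: "'a \<Rightarrow> real"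
  assumes manifold: "smooth_manifold X A"
    and conn: "connected_space X"
    and alpha: "riemannian_metric A g"
    and beta: "one_form A b"
    and bnorm: "\<forall>c\<in>A. \<forall>y\<in>snd c ` fst c. norm_sq (g c y) (b c y) < 1"
    and tau_smooth: "\<forall>c\<in>A. smooth_on (snd c ` fst c) (\<tau> \<circ> inv_into (fst c) (snd c))"
    and eq1: "\<forall>c\<in>A. \<forall>y\<in>snd c ` fst c. \<forall>i j.
        covd (g c) (b c) y i j =
          (\<tau> \<circ> inv_into (fst c) (snd c)) y *
            ((1 + 2 * norm_sq (g c y) (b c y)) * g c y $ i $ j - 3 * b c y $ i * b c y $ j)"
    and eq2: "\<forall>c\<in>A. \<forall>y\<in>snd c ` fst c. \<forall>i.
        pd (\<tau> \<circ> inv_into (fst c) (snd c)) i y =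
          - 2 * ((\<tau> \<circ> inv_into (fst c) (snd c)) y)^2 * b c y $ i"
  shows "\<exists>C::real. \<forall>c\<in>A. \<forall>p\<in>fst c.
           \<tau> p = C * (1 - norm_sq (g c (snd c p)) (b c (snd c p)))"
proof -
  have atlas: "smooth_atlas X A" using manifold unfolding smooth_manifold_def by blast
  define h where "h c y = (\<tau> \<circ> inv_into (fst c) (snd c)) y / (1 - norm_sq (g c y) (b c y))" for c y
  have \<tau>_chart: "(\<tau> \<circ> inv_into (fst c) (snd c)) (snd c p) = \<tau> p" if "c \<in> A" "p \<in> fst c" for c p
    using chart_inv_into[OF smooth_atlas_chart[OF atlas that(1)] that(2)] by simp
  have "h c (snd c p) = h d (snd d p)" if "c \<in> A" "d \<in> A" "p \<in> fst c" "p \<in> fst d" for c d p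
    using \<tau>_chart[OF that(1,3)] \<tau>_chart[OF that(2,4)]
      norm_sq_chart_independent[OF atlas alpha beta that(1,3,2,4)]
    by (simp add: h_def)
  moreover have "(h c has_derivative (\<lambda>v. 0)) (at y)" if c: "c \<in> A" and y: "y \<in> snd c ` fst c" for c y
    unfolding h_def
  proof (rule ratio_has_derivative_zero[OF chart_image_open[OF smooth_atlas_chart[OF atlas c]] y])
    show "\<forall>z\<in>snd c ` fst c. invertible (g c z)"
      using riemannian_metric_chartD(1)[OF alpha c] by blast
    show "(\<tau> \<circ> inv_into (fst c) (snd c)) differentiable (at y)"
      using tau_smooth c y smooth_on_imp_differentiable by blast
    show "norm_sq (g c y) (b c y) \<noteq> 1" using bnorm c y by fastforce
  qed (use riemannian_metric_chartD(2,3)[OF alpha c y] one_form_chartD[OF beta c y] eq1 eq2 c y in blast)+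
  ultimately obtain C where C: "\<forall>c\<in>A. \<forall>p\<in>fst c. h c (snd c p) = C"
    using constant_if_chartwise_zero_derivative[OF atlas conn, of h] by blast
  show ?thesis
  proof (intro exI ballI)
    fix c p assume c: "c \<in> A" and p: "p \<in> fst c"
    have "norm_sq (g c (snd c p)) (b c (snd c p)) \<noteq> 1" using bnorm c p by fastforce
    moreover have "h c (snd c p) = C" using C c p by blast
    ultimately show "\<tau> p = C * (1 - norm_sq (g c (snd c p)) (b c (snd c p)))"
      using \<tau>_chart[OF c p] by (simp add: h_def field_simps)
  qed
qed

end
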